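(* Let $\mathfrak g$ be of type $A_n$. For $s\ge1$, $$\mathbf A_s=\bigl\{\{\alpha_{i_k,j_k}\}_{1\le k\le s}:\ i_k,j_k\in I,\ i_1<i_2<\dots<i_s\le j_1<j_2<\dots<j_s\bigr\}.$$ In particular $\#\mathbf A_s=\binom{n}{2s}+\binom{n}{2s-1}$ for $s\ge1$, and $\sum_{s\ge0}\#\mathbf A_s=2^n$.
   Context: Simple roots $\alpha_1,\dots,\alpha_n$ of $A_n$ numbered as in Bourbaki, $I=\{1,\dots,n\}$; for $i\le j$, $\alpha_{i,j}=\alpha_i+\alpha_{i+1}+\dots+\alpha_j$, so $R^+=\{\alpha_{i,j}:i\le j\}$ and $\theta=\alpha_{1,n}$. Partial order: $\lambda\le\mu$ iff $\mu-\lambda$ is a $\mathbb Z_{\ge0}$-combination of simple roots. An antichain is a subset of $R^+$ of pairwise incomparable elements; $\Phi(A)=\{\alpha\in R^+:\alpha\ge\beta$ for some $\beta\in A\}$; $A$ is abelian if $\beta_1+\beta_2\notin R$ for all $\beta_1,\beta_2\in\Phi(A)$. $\mathbf A_s$ is the set of abelian antichains with $s$ elements, and $\mathbf A_0$ consists of the empty antichain only. Convention: $\binom{m}{k}=0$ if $k>m$. *)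

theory Defs
  imports Main "HOL-Library.Function_Algebras"
begin

text \<open>Elements of the root lattice are represented by their
coordinates with respect to the simple roots alpha_1, ..., alpha_n, i.e. as functions
nat => int (coordinate k = coefficient of alpha_k; coordinates outside I are 0).\<close>

definition simple_root :: "nat \<Rightarrow> nat \<Rightarrow> int" where
  "simple_root i = (\<lambda>k. if k = i then 1 else 0)"

definition alpha :: "nat \<Rightarrow> nat \<Rightarrow> nat \<Rightarrow> int" where
  "alpha i j = (\<lambda>k. \<Sum>l\<in>{i..j}. simple_root l k)"

definition posroots :: "nat \<Rightarrow> (nat \<Rightarrow> int) set" where
  "posroots n = {alpha i j | i j. 1 \<le> i \<and> i \<le> j \<and> j \<le> n}"

definition roots :: "nat \<Rightarrow> (nat \<Rightarrow> int) set" where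
  "roots n = posroots n \<union> uminus ` posroots n"

definition rle :: "nat \<Rightarrow> (nat \<Rightarrow> int) \<Rightarrow> (nat \<Rightarrow> int) \<Rightarrow> bool" where
  "rle n lam mu \<longleftrightarrow> (\<exists>c :: nat \<Rightarrow> nat. mu - lam = (\<lambda>k. \<Sum>i\<in>{1..n}. int (c i) * simple_root i k))"

definition antichain :: "nat \<Rightarrow> (nat \<Rightarrow> int) set \<Rightarrow> bool" where
  "antichain n A \<longleftrightarrow> A \<subseteq> posroots n \<and>
     (\<forall>a\<in>A. \<forall>b\<in>A. a \<noteq> b \<longrightarrow> \<not> rle n a b \<and> \<not> rle n b a)"

definition Phi :: "nat \<Rightarrow> (nat \<Rightarrow> int) set \<Rightarrow> (nat \<Rightarrow> int) set" where
  "Phi n A = {a \<in> posroots n. \<exists>b\<in>A. rle n b a}"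

definition abelian :: "nat \<Rightarrow> (nat \<Rightarrow> int) set \<Rightarrow> bool" where
  "abelian n A \<longleftrightarrow> (\<forall>b1\<in>Phi n A. \<forall>b2\<in>Phi n A. b1 + b2 \<notin> roots n)"

definition abelian_antichains :: "nat \<Rightarrow> nat \<Rightarrow> (nat \<Rightarrow> int) set set" where
  "abelian_antichains n s = {A. antichain n A \<and> abelian n A \<and> card A = s}"

end

theory Submission
  imports Defs
begin

text \<open>
  The positive root \<open>alpha i j\<close> is the interval \<open>[i, j]\<close>, and \<open>rle\<close> is inclusion of
  intervals, so an antichain is a family of intervals whose left and right ends both increase
  strictly. It is abelian iff the intervals have a common point \<open>c\<close>: then every root of
  \<open>Phi n A\<close> has coefficient 1 at \<open>c\<close>, so no sum of two of them is a root; and if the first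
  interval \<open>[i\<^sub>1, j\<^sub>1]\<close> ended before the last one started, then \<open>alpha i\<^sub>1 j\<^sub>1\<close> and
  \<open>alpha (j\<^sub>1 + 1) n\<close> would lie in \<open>Phi n A\<close> and add up to the root \<open>alpha i\<^sub>1 n\<close>.
  Such a family is determined by its set of endpoints \<open>i\<^sub>1 < \<dots> < i\<^sub>s \<le> j\<^sub>1 < \<dots> < j\<^sub>s\<close>,
  which is an arbitrary subset of \<open>{1..n}\<close> of size \<open>2s\<close> or \<open>2s - 1\<close>; summing over \<open>s\<close>
  counts every subset of \<open>{1..n}\<close> exactly once.
\<close>

section \<open>Positive roots as intervals\<close>

lemma alpha_apply: "alpha i j k = (if i \<le> k \<and> k \<le> j then 1 else 0)"
  by (simp add: alpha_def simple_root_def)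

lemma alpha_eq_iff:
  assumes "i \<le> j" "i' \<le> j'"
  shows "alpha i j = alpha i' j' \<longleftrightarrow> i = i' \<and> j = j'"
proof
  assume "alpha i j = alpha i' j'"
  then have "\<And>k. alpha i j k = alpha i' j' k" by simp
  from this[of i] this[of i'] this[of j] this[of j'] assms
  show "i = i' \<and> j = j'" by (simp add: alpha_apply split: if_splits)
qed simp

lemma alpha_add_alpha_Suc: "i \<le> Suc j \<Longrightarrow> j \<le> l \<Longrightarrow> alpha i j + alpha (Suc j) l = alpha i l"
  by (auto simp: alpha_apply)

lemma rle_iff:
  "rle n lam mu \<longleftrightarrow> (\<forall>k. lam k \<le> mu k) \<and> (\<forall>k. k \<notin> {1..n} \<longrightarrow> lam k = mu k)"
proof -
  have comb: "(\<lambda>k. \<Sum>i\<in>{1..n}. int (c i) * simple_root i k) = (\<lambda>k. if k \<in> {1..n} then int (c k) else 0)"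
    for c :: "nat \<Rightarrow> nat"
    by (simp add: simple_root_def if_distrib cong: if_cong)
  show ?thesis
  proof
    assume "rle n lam mu"
    then obtain c :: "nat \<Rightarrow> nat" where "mu - lam = (\<lambda>k. if k \<in> {1..n} then int (c k) else 0)"
      unfolding rle_def comb by blast
    then have "mu k - lam k = (if k \<in> {1..n} then int (c k) else 0)" for k
      by (simp add: fun_eq_iff)
    then show "(\<forall>k. lam k \<le> mu k) \<and> (\<forall>k. k \<notin> {1..n} \<longrightarrow> lam k = mu k)"
      by (smt (verit) of_nat_0_le_iff)
  next
    assume h: "(\<forall>k. lam k \<le> mu k) \<and> (\<forall>k. k \<notin> {1..n} \<longrightarrow> lam k = mu k)"
    then have "mu - lam = (\<lambda>k. if k \<in> {1..n} then int (nat (mu k - lam k)) else 0)"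
      by auto
    then show "rle n lam mu" unfolding rle_def comb by (rule exI[of _ "\<lambda>k. nat (mu k - lam k)"])
  qed
qed

lemma rle_alpha_iff:
  assumes "1 \<le> i" "i \<le> j" "j \<le> n" "1 \<le> p" "p \<le> q" "q \<le> n"
  shows "rle n (alpha i j) (alpha p q) \<longleftrightarrow> p \<le> i \<and> j \<le> q"
proof
  assume "rle n (alpha i j) (alpha p q)"
  then have "\<And>k. alpha i j k \<le> alpha p q k" by (simp add: rle_iff)
  from this[of i] this[of j] assms show "p \<le> i \<and> j \<le> q"
    by (auto simp: alpha_apply split: if_splits)
qed (use assms in \<open>auto simp: rle_iff alpha_apply\<close>)

lemma mem_posroots_iff: "a \<in> posroots n \<longleftrightarrow> (\<exists>i j. 1 \<le> i \<and> i \<le> j \<and> j \<le> n \<and> a = alpha i j)"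
  by (auto simp: posroots_def)

lemma alpha_mem_posroots: "1 \<le> i \<Longrightarrow> i \<le> j \<Longrightarrow> j \<le> n \<Longrightarrow> alpha i j \<in> posroots n"
  by (auto simp: posroots_def)

lemma finite_posroots: "finite (posroots n)"
proof -
  have "posroots n \<subseteq> (\<lambda>(i, j). alpha i j) ` ({1..n} \<times> {1..n})"
    by (auto simp: posroots_def)
  then show ?thesis by (rule finite_subset) auto
qed

lemma roots_le_1: "r \<in> roots n \<Longrightarrow> r k \<le> 1"
  by (auto simp: roots_def posroots_def alpha_apply)

lemma mem_Phi_if_mem: "A \<subseteq> posroots n \<Longrightarrow> a \<in> A \<Longrightarrow> a \<in> Phi n A"
  by (auto simp: Phi_def rle_iff)

lemma abelian_if_common_coordinate:
  assumes "\<forall>a\<in>A. a c = 1"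
  shows "abelian n A"
  unfolding abelian_def
proof (intro ballI)
  have Phi_coord: "b c = 1" if b: "b \<in> Phi n A" for b
  proof -
    obtain a where "b \<in> roots n" "a \<in> A" "rle n a b"
      using b by (auto simp: Phi_def roots_def)
    then show "b c = 1"
      using assms roots_le_1[of b n c] unfolding rle_iff by (metis antisym)
  qed
  fix b1 b2 assume "b1 \<in> Phi n A" "b2 \<in> Phi n A"
  then have "(b1 + b2) c = 2" by (simp add: Phi_coord)
  then show "b1 + b2 \<notin> roots n"
    using roots_le_1[of "b1 + b2" n c] by auto
qed

lemma abelian_alpha_overlap:
  assumes "abelian n A" "A \<subseteq> posroots n" "alpha i j \<in> A" "alpha p q \<in> A"
    and "1 \<le> i" "i \<le> j" "p \<le> q" "q \<le> n"
  shows "p \<le> j"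
proof (rule ccontr)
  assume "\<not> p \<le> j"
  then have "1 \<le> p" "Suc j \<le> n" "alpha (Suc j) n \<in> posroots n"
    using assms(5-8) by (auto intro: alpha_mem_posroots)
  moreover have "rle n (alpha p q) (alpha (Suc j) n)"
    using calculation \<open>\<not> p \<le> j\<close> assms(7,8) by (simp add: rle_alpha_iff)
  ultimately have "alpha (Suc j) n \<in> Phi n A"
    using assms(4) by (auto simp: Phi_def)
  moreover have "alpha i j \<in> Phi n A"
    using assms(2,3) by (rule mem_Phi_if_mem)
  moreover have "alpha i j + alpha (Suc j) n \<in> roots n"
    using \<open>Suc j \<le> n\<close> assms(5,6)
    by (auto simp: alpha_add_alpha_Suc roots_def intro: alpha_mem_posroots)
  ultimately show False
    using assms(1) by (auto simp: abelian_def)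
qed

lemma antichain_alpha_no_containment:
  assumes "antichain n A" "alpha i j \<in> A" "alpha p q \<in> A"
    and "1 \<le> p" "p \<le> i" "i \<le> j" "j \<le> q" "q \<le> n"
  shows "p = i \<and> q = j"
proof -
  have "rle n (alpha i j) (alpha p q)"
    using assms(4-8) by (simp add: rle_alpha_iff)
  then have "alpha i j = alpha p q"
    using assms(1-3) by (auto simp: antichain_def)
  then show ?thesis
    using assms(5-7) alpha_eq_iff by (metis order.trans)
qed

section \<open>Abelian antichains as families of overlapping intervals\<close>

text \<open>Both ends increase strictly, so \<open>i s \<le> j 1\<close> says that the point \<open>i s\<close> lies in every
  interval \<open>[i k, j k]\<close>.\<close>

definition staircase :: "nat \<Rightarrow> nat \<Rightarrow> (nat \<Rightarrow> nat) \<Rightarrow> (nat \<Rightarrow> nat) \<Rightarrow> bool" where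
  "staircase n s i j \<longleftrightarrow>
     (\<forall>k\<in>{1..s}. 1 \<le> i k \<and> j k \<le> n) \<and>
     (\<forall>k\<in>{1..<s}. i k < i (Suc k) \<and> j k < j (Suc k)) \<and>
     i s \<le> j 1"

definition root_family :: "nat \<Rightarrow> (nat \<Rightarrow> nat) \<Rightarrow> (nat \<Rightarrow> nat) \<Rightarrow> (nat \<Rightarrow> int) set" where
  "root_family s i j = {alpha (i k) (j k) | k. k \<in> {1..s}}"

lemma staircase_less:
  assumes "staircase n s i j" "1 \<le> a" "a < b" "b \<le> s"
  shows "i a < i b" "j a < j b"
proof -
  have "{a..<b} \<subseteq> {1..<s}" using assms(2,4) by auto
  moreover have "\<And>k. k \<in> {1..<s} \<Longrightarrow> i k < i (Suc k)" "\<And>k. k \<in> {1..<s} \<Longrightarrow> j k < j (Suc k)"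
    using assms(1) by (auto simp: staircase_def)
  ultimately show "i a < i b" "j a < j b"
    using assms(3) lift_Suc_mono_less_ivl by metis+
qed

lemma staircase_le:
  assumes "staircase n s i j" "k \<in> {1..s}"
  shows "1 \<le> i k" "i k \<le> i s" "i s \<le> j k" "j k \<le> n" "i k \<le> j k"
proof -
  have "i k \<le> i s" "j 1 \<le> j k"
    using assms staircase_less[OF assms(1)] by (auto simp: le_less)
  then show "1 \<le> i k" "i k \<le> i s" "i s \<le> j k" "j k \<le> n" "i k \<le> j k"
    using assms by (auto simp: staircase_def)
qed

lemma card_root_family:
  assumes "staircase n s i j"
  shows "card (root_family s i j) = s"
proof -
  have "inj_on (\<lambda>k. alpha (i k) (j k)) {1..s}"
  proof (rule inj_onI)
    fix a b assume ab: "a \<in> {1..s}" "b \<in> {1..s}" "alpha (i a) (j a) = alpha (i b) (j b)"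
    then have "i a = i b"
      using staircase_le(5)[OF assms] alpha_eq_iff by blast
    then show "a = b"
      using ab(1,2) staircase_less[OF assms] by (metis atLeastAtMost_iff less_irrefl nat_neq_iff)
  qed
  then show ?thesis
    unfolding root_family_def Setcompr_eq_image by (simp add: card_image)
qed

lemma antichain_root_family:
  assumes "staircase n s i j"
  shows "antichain n (root_family s i j)"
proof -
  have "root_family s i j \<subseteq> posroots n"
    using staircase_le[OF assms] by (auto simp: root_family_def intro!: alpha_mem_posroots)
  moreover have "\<not> rle n x y \<and> \<not> rle n y x"
    if xy_mem: "x \<in> root_family s i j" "y \<in> root_family s i j" "x \<noteq> y" for x y
  proof -
    obtain a b where ab: "a \<in> {1..s}" "b \<in> {1..s}" "a \<noteq> b"
      and xy: "x = alpha (i a) (j a)" "y = alpha (i b) (j b)"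
      using xy_mem by (auto simp: root_family_def)
    have "(i a < i b \<and> j a < j b) \<or> (i b < i a \<and> j b < j a)"
      using ab staircase_less[OF assms] by (metis atLeastAtMost_iff nat_neq_iff)
    then show ?thesis
      using xy ab(1,2) staircase_le[OF assms] rle_alpha_iff by (metis not_le)
  qed
  ultimately show ?thesis
    by (auto simp: antichain_def)
qed

lemma abelian_root_family:
  assumes "staircase n s i j"
  shows "abelian n (root_family s i j)"
proof (rule abelian_if_common_coordinate)
  show "\<forall>a\<in>root_family s i j. a (i s) = 1"
    using staircase_le[OF assms] by (auto simp: root_family_def alpha_apply)
qed

lemma root_family_mem_abelian_antichains:
  assumes "staircase n s i j"
  shows "root_family s i j \<in> abelian_antichains n s"
  using assms by (simp add: abelian_antichains_def antichain_root_family abelian_root_family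
      card_root_family)

lemma obtain_enumeration_by_key:
  fixes key :: "'a \<Rightarrow> nat"
  assumes "finite A" "inj_on key A" "card A = s"
  obtains e where "e ` {1..s} = A" "\<forall>k\<in>{1..<s}. key (e k) < key (e (Suc k))"
proof
  define xs where "xs = sorted_list_of_set (key ` A)"
  have xs: "sorted_wrt (<) xs" "set xs = key ` A" "length xs = s"
    using assms by (simp_all add: xs_def card_image)
  have "set xs = (\<lambda>k. xs ! (k - 1)) ` {1..s}"
    unfolding set_conv_nth xs(3) by (force simp: image_iff)
  then show "(\<lambda>k. inv_into A key (xs ! (k - 1))) ` {1..s} = A"
    using assms(2) xs(2) by (metis image_image inv_into_image_cancel order_refl)
  have "key (inv_into A key (xs ! t)) = xs ! t" if "t < s" for t
    using that xs(2,3) by (metis f_inv_into_f nth_mem)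
  then show "\<forall>k\<in>{1..<s}. key (inv_into A key (xs ! (k - 1))) < key (inv_into A key (xs ! (Suc k - 1)))"
    using sorted_wrt_nth_less[OF xs(1)] xs(3) by auto
qed

lemma abelian_antichain_obtain_staircase:
  assumes "A \<in> abelian_antichains n s" "1 \<le> s"
  obtains i j where "staircase n s i j" "A = root_family s i j"
proof -
  have anti: "antichain n A" and ab: "abelian n A" and card: "card A = s"
    using assms(1) by (auto simp: abelian_antichains_def)
  have sub: "A \<subseteq> posroots n"
    using anti by (simp add: antichain_def)
  obtain l r where lr: "\<forall>a\<in>A. 1 \<le> l a \<and> l a \<le> r a \<and> r a \<le> n \<and> a = alpha (l a) (r a)"
    using sub unfolding mem_posroots_iff subset_iff by metis
  have no_containment: "a = b" if "a \<in> A" "b \<in> A" "l a \<le> l b" "r b \<le> r a" for a b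
    using antichain_alpha_no_containment[OF anti, of "l b" "r b" "l a" "r a"] that lr by metis
  have "inj_on l A"
    by (rule inj_onI) (metis nle_le no_containment)
  then obtain e where e: "e ` {1..s} = A" "\<forall>k\<in>{1..<s}. l (e k) < l (e (Suc k))"
    using obtain_enumeration_by_key finite_subset[OF sub finite_posroots] card by metis
  define i where "i = l \<circ> e"
  define j where "j = r \<circ> e"
  have eA: "e k \<in> A" if "k \<in> {1..s}" for k
    using e(1) that by blast
  have "root_family s i j = (\<lambda>a. alpha (l a) (r a)) ` e ` {1..s}"
    by (auto simp: root_family_def i_def j_def)
  also have "\<dots> = A"
    using e(1) lr by force
  finally have "A = root_family s i j" ..
  moreover have "staircase n s i j"
    unfolding staircase_def
  proof (intro conjI ballI)
    fix k assume "k \<in> {1..s}"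
    then show "1 \<le> i k" "j k \<le> n"
      using lr eA by (auto simp: i_def j_def)
  next
    fix k assume k: "k \<in> {1..<s}"
    then show "i k < i (Suc k)"
      using e(2) by (simp add: i_def)
    show "j k < j (Suc k)"
      using k e(2) eA no_containment[of "e k" "e (Suc k)"] by (force simp: i_def j_def)
  next
    have "e 1 \<in> A" "e s \<in> A"
      using eA assms(2) by auto
    then show "i s \<le> j 1"
      using abelian_alpha_overlap[OF ab sub, of "l (e 1)" "r (e 1)" "l (e s)" "r (e s)"] lr
      by (simp add: i_def j_def)
  qed
  ultimately show ?thesis
    using that by blast
qed

lemma abelian_antichains_eq_staircase_families:
  assumes "1 \<le> s"
  shows "abelian_antichains n s = {root_family s i j | i j. staircase n s i j}"
  using abelian_antichain_obtain_staircase[OF _ assms] root_family_mem_abelian_antichains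
  by blast

section \<open>Counting by endpoint sets\<close>

lemma alpha_mem_root_family_iff:
  assumes "staircase n s i j" "p \<le> q"
  shows "alpha p q \<in> root_family s i j \<longleftrightarrow> (\<exists>k\<in>{1..s}. p = i k \<and> q = j k)"
proof
  assume "alpha p q \<in> root_family s i j"
  then obtain k where "k \<in> {1..s}" "alpha p q = alpha (i k) (j k)"
    by (auto simp: root_family_def)
  then show "\<exists>k\<in>{1..s}. p = i k \<and> q = j k"
    using assms(2) staircase_le(5)[OF assms(1)] alpha_eq_iff by blast
qed (auto simp: root_family_def)

definition root_endpoints :: "(nat \<Rightarrow> int) set \<Rightarrow> nat set" where
  "root_endpoints A = {p. \<exists>q. p \<le> q \<and> alpha p q \<in> A} \<union> {q. \<exists>p. p \<le> q \<and> alpha p q \<in> A}"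

lemma root_endpoints_root_family:
  assumes "staircase n s i j"
  shows "root_endpoints (root_family s i j) = i ` {1..s} \<union> j ` {1..s}"
proof -
  have "{p. \<exists>q. p \<le> q \<and> alpha p q \<in> root_family s i j} = i ` {1..s}"
    "{q. \<exists>p. p \<le> q \<and> alpha p q \<in> root_family s i j} = j ` {1..s}"
    using alpha_mem_root_family_iff[OF assms] staircase_le(5)[OF assms] by fastforce+
  then show ?thesis
    by (simp add: root_endpoints_def)
qed

lemma staircase_sorted_list:
  assumes "sorted_wrt (<) x" "set x \<subseteq> {1..n}" "length x \<in> {2 * s - 1, 2 * s}"
  shows "staircase n s (\<lambda>k. x ! (k - 1)) (\<lambda>k. x ! (length x - s + k - 1))"
proof -
  have less: "x ! a < x ! b" if "a < b" "b < length x" for a b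
    using sorted_wrt_nth_less[OF assms(1) that] .
  have mem: "x ! a \<in> {1..n}" if "a < length x" for a
    using assms(2) nth_mem[OF that] by blast
  show ?thesis
    unfolding staircase_def
  proof (intro conjI ballI)
    fix k assume "k \<in> {1..s}"
    then have "k - 1 < length x" "length x - s + k - 1 < length x"
      using assms(3) by auto
    then show "1 \<le> x ! (k - 1)" "x ! (length x - s + k - 1) \<le> n"
      using mem by auto
  next
    fix k assume "k \<in> {1..<s}"
    then have "k - 1 < Suc k - 1" "Suc k - 1 < length x"
      "length x - s + k - 1 < length x - s + Suc k - 1" "length x - s + Suc k - 1 < length x"
      using assms(3) by auto
    then show "x ! (k - 1) < x ! (Suc k - 1)"
      "x ! (length x - s + k - 1) < x ! (length x - s + Suc k - 1)"
      using less by blast+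
  next
    show "x ! (s - 1) \<le> x ! (length x - s + 1 - 1)"
    proof (cases "s - 1 = length x - s + 1 - 1")
      case False
      then have "s - 1 < length x - s + 1 - 1" "length x - s + 1 - 1 < length x"
        using assms(3) by auto
      then show ?thesis
        using less by fastforce
    qed simp
  qed
qed

lemma endpoints_sorted_list:
  assumes "length x \<in> {2 * s - 1, 2 * s}"
  shows "(\<lambda>k. x ! (k - 1)) ` {1..s} \<union> (\<lambda>k. x ! (length x - s + k - 1)) ` {1..s} = set x"
proof -
  have "{..<length x} = (\<lambda>k. k - 1) ` {1..s} \<union> (\<lambda>k. length x - s + k - 1) ` {1..s}"
  proof (intro equalityI subsetI)
    fix t assume "t \<in> {..<length x}"
    then have "Suc t \<in> {1..s} \<and> t = Suc t - 1 \<or> t + s + 1 - length x \<in> {1..s} \<and> t = length x - s + (t + s + 1 - length x) - 1"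
      using assms by auto
    then show "t \<in> (\<lambda>k. k - 1) ` {1..s} \<union> (\<lambda>k. length x - s + k - 1) ` {1..s}"
      by blast
  qed (use assms in auto)
  then have "nth x ` {..<length x} = (\<lambda>k. x ! (k - 1)) ` {1..s} \<union> (\<lambda>k. x ! (length x - s + k - 1)) ` {1..s}"
    by (simp add: image_Un image_image)
  moreover have "set x = nth x ` {..<length x}"
    by (auto simp: in_set_conv_nth)
  ultimately show ?thesis
    by simp
qed

lemma staircase_obtain_sorted_list:
  assumes "staircase n s i j" "1 \<le> s"
  obtains x where "sorted_wrt (<) x" "set x \<subseteq> {1..n}" "length x \<in> {2 * s - 1, 2 * s}"
    "\<forall>k\<in>{1..s}. x ! (k - 1) = i k \<and> x ! (length x - s + k - 1) = j k"
proof -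
  define m where "m = (if i s < j 1 then 2 * s else 2 * s - 1)"
  \<comment> \<open>the left ends followed by the right ends, where \<open>j 1\<close> is dropped if it equals \<open>i s\<close>\<close>
  define g where "g t = (if t < s then i (Suc t) else j (t + s + 1 - m))" for t
  have i_less: "i a < i b" and j_less: "j a < j b" if "1 \<le> a" "a < b" "b \<le> s" for a b
    using staircase_less[OF assms(1) that] by auto
  have j_1_le: "j 1 \<le> j k" if "k \<in> {1..s}" for k
    using j_less[of 1 k] that by (cases "k = 1") auto
  have m: "s \<le> m" "m \<le> 2 * s"
    using assms(2) by (auto simp: m_def)
  have g_less: "g t < g t'" if "t < t'" "t' < m" for t t'
  proof -
    consider "t' < s" | "s \<le> t" | "t < s" "s \<le> t'"
      using \<open>t < t'\<close> by linarith
    then show ?thesis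
    proof cases
      case 1
      then show ?thesis using i_less \<open>t < t'\<close> by (simp add: g_def)
    next
      case 2
      then show ?thesis using j_less that m by (simp add: g_def)
    next
      case 3
      have "i (Suc t) \<le> i s"
        using 3 staircase_le(2)[OF assms(1)] by simp
      also have "i s < j (t' + s + 1 - m)"
      proof (cases "i s < j 1")
        case True
        moreover have "t' + s + 1 - m \<in> {1..s}"
          using 3 that m by auto
        ultimately show ?thesis
          using j_1_le by fastforce
      next
        case False
        then have "i s = j 1" "1 < t' + s + 1 - m" "t' + s + 1 - m \<le> s"
          using assms(1) 3 that by (auto simp: staircase_def m_def)
        then show ?thesis
          using j_less[of 1 "t' + s + 1 - m"] by simp
      qed
      finally show ?thesis using 3 by (simp add: g_def)
    qed
  qed
  have g_mem: "g t \<in> {1..n}" if "t < m" for t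
  proof (cases "t < s")
    case True
    then show ?thesis
      using staircase_le[OF assms(1), of "Suc t"] by (auto simp: g_def)
  next
    case False
    then have "t + s + 1 - m \<in> {1..s}"
      using that m by auto
    then show ?thesis
      using staircase_le[OF assms(1), of "t + s + 1 - m"] False by (auto simp: g_def)
  qed
  have g_nth: "g (k - 1) = i k \<and> g (m - s + k - 1) = j k" if "k \<in> {1..s}" for k
  proof (cases "m - s + k - 1 < s")
    case True
    then have "i s = j 1" "k = 1" "m = 2 * s - 1"
      using that assms(1) m by (auto simp: m_def staircase_def split: if_splits)
    then show ?thesis using that by (auto simp: g_def)
  qed (use that m in \<open>auto simp: g_def\<close>)
  show ?thesis
  proof
    show "sorted_wrt (<) (map g [0..<m])"
      unfolding sorted_wrt_map by (rule sorted_wrt_mono_rel[OF _ sorted_wrt_upt]) (use g_less in auto)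
    show "set (map g [0..<m]) \<subseteq> {1..n}"
      using g_mem by auto
    show "length (map g [0..<m]) \<in> {2 * s - 1, 2 * s}"
      by (simp add: m_def)
    show "\<forall>k\<in>{1..s}. map g [0..<m] ! (k - 1) = i k \<and> map g [0..<m] ! (length (map g [0..<m]) - s + k - 1) = j k"
      using g_nth m by auto
  qed
qed

text \<open>The \<open>s\<close> smallest elements of \<open>B\<close> are the left ends and the \<open>s\<close> largest the right
  ends; the two overlap in one element when \<open>card B = 2 * s - 1\<close>.\<close>

definition endpoint_family :: "nat \<Rightarrow> nat set \<Rightarrow> (nat \<Rightarrow> int) set" where
  "endpoint_family s B = root_family s
     (\<lambda>k. sorted_list_of_set B ! (k - 1)) (\<lambda>k. sorted_list_of_set B ! (card B - s + k - 1))"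

lemma staircase_endpoint_family:
  assumes "B \<subseteq> {1..n}" "card B \<in> {2 * s - 1, 2 * s}"
  shows "staircase n s
     (\<lambda>k. sorted_list_of_set B ! (k - 1)) (\<lambda>k. sorted_list_of_set B ! (card B - s + k - 1))"
proof -
  have "finite B"
    using assms(1) finite_subset by blast
  then show ?thesis
    using staircase_sorted_list[of "sorted_list_of_set B" n s] assms by simp
qed

lemma root_endpoints_endpoint_family:
  assumes "B \<subseteq> {1..n}" "card B \<in> {2 * s - 1, 2 * s}"
  shows "root_endpoints (endpoint_family s B) = B"
proof -
  have "finite B"
    using assms(1) finite_subset by blast
  then show ?thesis
    using root_endpoints_root_family[OF staircase_endpoint_family[OF assms]]
      endpoints_sorted_list[of "sorted_list_of_set B" s] assms(2)
    by (simp add: endpoint_family_def)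
qed

lemma staircase_obtain_endpoint_set:
  assumes "staircase n s i j" "1 \<le> s"
  obtains B where "B \<subseteq> {1..n}" "card B \<in> {2 * s - 1, 2 * s}" "root_family s i j = endpoint_family s B"
proof -
  obtain x where x: "sorted_wrt (<) x" "set x \<subseteq> {1..n}" "length x \<in> {2 * s - 1, 2 * s}"
    and ends: "\<forall>k\<in>{1..s}. x ! (k - 1) = i k \<and> x ! (length x - s + k - 1) = j k"
    using staircase_obtain_sorted_list[OF assms] .
  have card: "card (set x) = length x"
    using x(1) by (simp add: strict_sorted_iff distinct_card)
  then have "sorted_list_of_set (set x) = x"
    using x(1) sorted_list_of_set_unique[of "set x" x] by simp
  then have "endpoint_family s (set x) = root_family s i j"
    using ends card unfolding endpoint_family_def root_family_def Setcompr_eq_image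
    by (intro image_cong) auto
  then show ?thesis
    using that x card by simp
qed

lemma abelian_antichains_eq_image_endpoint_family:
  assumes "1 \<le> s"
  shows "abelian_antichains n s = endpoint_family s ` {B. B \<subseteq> {1..n} \<and> card B \<in> {2 * s - 1, 2 * s}}"
proof -
  have "endpoint_family s B \<in> abelian_antichains n s"
    if "B \<subseteq> {1..n}" "card B \<in> {2 * s - 1, 2 * s}" for B
    using root_family_mem_abelian_antichains[OF staircase_endpoint_family[OF that]]
    by (simp add: endpoint_family_def)
  moreover have "A \<in> endpoint_family s ` {B. B \<subseteq> {1..n} \<and> card B \<in> {2 * s - 1, 2 * s}}"
    if A: "A \<in> abelian_antichains n s" for A
  proof -
    obtain i j where "staircase n s i j" "A = root_family s i j"
      using abelian_antichain_obtain_staircase[OF A assms] .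
    then obtain B where "B \<subseteq> {1..n}" "card B \<in> {2 * s - 1, 2 * s}" "A = endpoint_family s B"
      using staircase_obtain_endpoint_set[OF _ assms] by metis
    then show ?thesis
      by blast
  qed
  ultimately show ?thesis
    by blast
qed

lemma card_subsets_of_two_sizes:
  assumes "finite A" "a \<noteq> b"
  shows "card {B. B \<subseteq> A \<and> card B \<in> {a, b}} = (card A choose a) + (card A choose b)"
proof -
  have "{B. B \<subseteq> A \<and> card B \<in> {a, b}} = {B. B \<subseteq> A \<and> card B = a} \<union> {B. B \<subseteq> A \<and> card B = b}"
    by auto
  moreover have "finite {B. B \<subseteq> A \<and> card B = c}" for c
    using assms(1) by simp
  ultimately show ?thesis
    using assms by (simp add: card_Un_disjoint disjoint_iff n_subsets)
qed

lemma card_abelian_antichains: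
  assumes "1 \<le> s"
  shows "card (abelian_antichains n s) = (n choose (2 * s)) + (n choose (2 * s - 1))"
proof -
  let ?S = "{B. B \<subseteq> {1..n} \<and> card B \<in> {2 * s - 1, 2 * s}}"
  have "inj_on (endpoint_family s) ?S"
    by (rule inj_on_inverseI[where g = root_endpoints]) (use root_endpoints_endpoint_family in blast)
  then have "card (abelian_antichains n s) = card ?S"
    by (simp add: abelian_antichains_eq_image_endpoint_family[OF assms] card_image)
  also have "\<dots> = (n choose (2 * s)) + (n choose (2 * s - 1))"
    using card_subsets_of_two_sizes[of "{1..n}" "2 * s - 1" "2 * s"] assms by simp
  finally show ?thesis .
qed

lemma abelian_antichains_0: "abelian_antichains n 0 = {{}}"
proof (intro equalityI subsetI)
  fix A assume "A \<in> abelian_antichains n 0"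
  then have "A \<subseteq> posroots n" "card A = 0"
    by (simp_all add: abelian_antichains_def antichain_def)
  then show "A \<in> {{}}"
    using finite_subset[OF _ finite_posroots] by fastforce
next
  fix A :: "(nat \<Rightarrow> int) set" assume "A \<in> {{}}"
  moreover have "Phi n {} = {}"
    by (simp add: Phi_def)
  ultimately show "A \<in> abelian_antichains n 0"
    by (simp add: abelian_antichains_def antichain_def abelian_def)
qed

lemma sum_binomial_pairs:
  "(\<Sum>s\<le>m. if s = 0 then 1 else (n choose (2 * s)) + (n choose (2 * s - 1))) = (\<Sum>k\<le>2 * m. n choose k)"
proof (induction m)
  case (Suc m)
  have "(\<Sum>k\<le>2 * Suc m. n choose k) = (\<Sum>k\<le>2 * m. n choose k) + (n choose (2 * m + 1)) + (n choose (2 * m + 2))"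
    by (simp add: numeral_2_eq_2)
  then show ?case
    using Suc by simp
qed simp

lemma sum_binomial_atMost:
  assumes "n \<le> m"
  shows "(\<Sum>k\<le>m. n choose k) = 2 ^ n"
proof -
  have "(\<Sum>k\<le>m. n choose k) = (\<Sum>k\<le>n. n choose k)"
    by (rule sum.mono_neutral_right) (use assms in auto)
  then show ?thesis
    by (simp add: choose_row_sum)
qed

theorem mainTheorem6:
  fixes n :: nat
  assumes "n \<ge> 1"
  shows "(\<forall>s\<ge>1.
            abelian_antichains n s =
              {{alpha (i k) (j k) | k. k \<in> {1..s}} | i j.
                 (\<forall>k\<in>{1..s}. 1 \<le> i k \<and> j k \<le> n) \<and>
                 (\<forall>k\<in>{1..<s}. i k < i (Suc k) \<and> j k < j (Suc k)) \<and>
                 i s \<le> j 1}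
          \<and> card (abelian_antichains n s) = (n choose (2*s)) + (n choose (2*s - 1)))
       \<and> (\<forall>m\<ge>n. (\<Sum>s\<le>m. card (abelian_antichains n s)) = 2 ^ n)"
proof (intro conjI allI impI)
  fix s :: nat
  assume s: "s \<ge> 1"
  show "abelian_antichains n s =
              {{alpha (i k) (j k) | k. k \<in> {1..s}} | i j.
                 (\<forall>k\<in>{1..s}. 1 \<le> i k \<and> j k \<le> n) \<and>
                 (\<forall>k\<in>{1..<s}. i k < i (Suc k) \<and> j k < j (Suc k)) \<and>
                 i s \<le> j 1}"
    using abelian_antichains_eq_staircase_families[OF s] unfolding root_family_def staircase_def .
  show "card (abelian_antichains n s) = (n choose (2*s)) + (n choose (2*s - 1))"
    using card_abelian_antichains[OF s] .
next
  fix m :: nat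
  assume "n \<le> m"
  have "(\<Sum>s\<le>m. card (abelian_antichains n s)) =
        (\<Sum>s\<le>m. if s = 0 then 1 else (n choose (2 * s)) + (n choose (2 * s - 1)))"
    by (rule sum.cong) (simp_all add: abelian_antichains_0 card_abelian_antichains)
  also have "\<dots> = (\<Sum>k\<le>2 * m. n choose k)"
    by (rule sum_binomial_pairs)
  also have "\<dots> = 2 ^ n"
    using \<open>n \<le> m\<close> by (simp add: sum_binomial_atMost)
  finally show "(\<Sum>s\<le>m. card (abelian_antichains n s)) = 2 ^ n" .
qed

end
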